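(* For all integers $r, c \geq 1$, $S(r,c) = T(r,c) = \binom{r+c-2}{c-1}$.
   Context: Six-vertex model: on an $r \times c$ grid ($r$ rows, $c$ columns) there are $r$ horizontal lines and $c$ vertical lines meeting in $rc$ vertices. Each horizontal line consists of $c+1$ edges (the outermost ones are a left and a right boundary edge) and each vertical line of $r+1$ edges (the outermost ones are a top and a bottom boundary edge). A state assigns an orientation to every edge, agreeing with prescribed orientations on the boundary edges, such that at every vertex exactly two of the four adjacent edges point into the vertex and two point out. $S(r,c)$ is the number of states on the $r\times c$ grid with boundary conditions: all left boundary arrows point right; the right boundary arrow of the bottom row points left and all other right boundary arrows point right; all bottom boundary arrows point down; the top boundary arrow of the leftmost column points up and all other top boundary arrows point down. $T(r,c)$ is the number of states on the $r\times c$ grid with boundary conditions: the left boundary arrow of the top row points left and all other left boundary arrows point right; the right boundary arrow of the bottom row points left and all other right boundary arrows point right; all top and bottom boundary arrows point down. *)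

theory Defs
  imports Main
begin

text \<open>Rows are numbered 0..r-1 from top to bottom, columns 0..c-1 from left to right.
  Horizontal edges: h i j for row i < r and j \<le> c; edge j lies between vertex (i,j-1) and
  (i,j); j = 0 is the left boundary edge and j = c the right boundary edge.
  h i j = True means the arrow points right.
  Vertical edges: v j i for column j < c and i \<le> r; edge i lies between vertex (i-1,j) and
  (i,j); i = 0 is the top boundary edge and i = r the bottom boundary edge.
  v j i = True means the arrow points down.
  Outside these index ranges the functions are required to be False (normalisation,
  so that states are in bijection with orientations).\<close>

definition ice_rule :: "nat \<Rightarrow> nat \<Rightarrow> (nat \<Rightarrow> nat \<Rightarrow> bool) \<Rightarrow> (nat \<Rightarrow> nat \<Rightarrow> bool) \<Rightarrow> bool" where
  "ice_rule r c h v \<longleftrightarrow>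
     (\<forall>i<r. \<forall>j<c. length (filter id [h i j, \<not> h i (Suc j), v j i, \<not> v j (Suc i)]) = 2)"

definition six_vertex_states ::
  "nat \<Rightarrow> nat \<Rightarrow> (nat \<Rightarrow> bool) \<Rightarrow> (nat \<Rightarrow> bool) \<Rightarrow> (nat \<Rightarrow> bool) \<Rightarrow> (nat \<Rightarrow> bool)
    \<Rightarrow> ((nat \<Rightarrow> nat \<Rightarrow> bool) \<times> (nat \<Rightarrow> nat \<Rightarrow> bool)) set" where
  "six_vertex_states r c L R Tp B =
     {(h, v). (\<forall>i j. h i j \<longrightarrow> i < r \<and> j \<le> c) \<and> (\<forall>j i. v j i \<longrightarrow> j < c \<and> i \<le> r)
        \<and> (\<forall>i<r. h i 0 = L i \<and> h i c = R i)
        \<and> (\<forall>j<c. v j 0 = Tp j \<and> v j r = B j)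
        \<and> ice_rule r c h v}"

text \<open>S: left all right (True); right: bottom row left (False), others right;
  bottom all down (True); top: leftmost column up (False), others down.\<close>
definition S :: "nat \<Rightarrow> nat \<Rightarrow> nat" where
  "S r c = card (six_vertex_states r c (\<lambda>i. True) (\<lambda>i. i \<noteq> r - 1) (\<lambda>j. j \<noteq> 0) (\<lambda>j. True))"

text \<open>T: left: top row left, others right; right: bottom row left, others right;
  top and bottom all down.\<close>
definition T :: "nat \<Rightarrow> nat \<Rightarrow> nat" where
  "T r c = card (six_vertex_states r c (\<lambda>i. i \<noteq> 0) (\<lambda>i. i \<noteq> r - 1) (\<lambda>j. True) (\<lambda>j. True))"

end

theory Submission
  imports Defs
begin

text \<open>At the top-left vertex the left and the top boundary arrow have opposite orientation
  relative to the vertex (one points in, one out), so exactly one of the two interior edges there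
  points out of it. If it is the edge to the right, the ice rule propagates along the top row,
  whose top arrows (except the first) all point down into it: the whole top row is forced, and
  removing it leaves a state on one row fewer with the boundary of S. If it is the edge below,
  the same happens to the first column (by transposing the grid), leaving a state with one column
  fewer and the boundary of T. Hence S(r,c) and T(r,c) both equal S(r-1,c) + T(r,c-1), so
  S = T obeys Pascal's rule, and the degenerate grids supply the initial values.\<close>

definition ice_vertex :: "bool \<Rightarrow> bool \<Rightarrow> bool \<Rightarrow> bool \<Rightarrow> bool" where
  "ice_vertex a b c d \<longleftrightarrow> (a \<and> c \<longleftrightarrow> b \<and> d) \<and> (a \<or> c \<longleftrightarrow> b \<or> d)"

lemma ice_vertex_iff_two_in:
  "length (filter id [a, \<not> b, c, \<not> d]) = 2 \<longleftrightarrow> ice_vertex a b c d"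
  by (cases a; cases b; cases c; cases d) (auto simp: ice_vertex_def)

lemma ice_vertex_commute: "ice_vertex c d a b \<longleftrightarrow> ice_vertex a b c d"
  unfolding ice_vertex_def by blast

lemma mem_six_vertex_states_iff:
  "(h, v) \<in> six_vertex_states r c L R Tp B \<longleftrightarrow>
    (\<forall>i j. h i j \<longrightarrow> i < r \<and> j \<le> c) \<and> (\<forall>j i. v j i \<longrightarrow> j < c \<and> i \<le> r)
    \<and> (\<forall>i<r. h i 0 = L i \<and> h i c = R i) \<and> (\<forall>j<c. v j 0 = Tp j \<and> v j r = B j)
    \<and> (\<forall>i<r. \<forall>j<c. ice_vertex (h i j) (h i (Suc j)) (v j i) (v j (Suc i)))"
  unfolding six_vertex_states_def ice_rule_def ice_vertex_iff_two_in by simp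

lemma six_vertex_states_cong:
  assumes "\<forall>i<r. L i = L' i" "\<forall>i<r. R i = R' i" "\<forall>j<c. Tp j = Tp' j" "\<forall>j<c. B j = B' j"
  shows "six_vertex_states r c L R Tp B = six_vertex_states r c L' R' Tp' B'"
  using assms unfolding six_vertex_states_def by auto

lemma finite_binary_predicates_within:
  assumes "finite K"
  shows "finite {h :: 'a \<Rightarrow> 'b \<Rightarrow> bool. \<forall>i j. h i j \<longrightarrow> (i, j) \<in> K}"
proof (rule finite_subset)
  show "{h :: 'a \<Rightarrow> 'b \<Rightarrow> bool. \<forall>i j. h i j \<longrightarrow> (i, j) \<in> K} \<subseteq> (\<lambda>A i j. (i, j) \<in> A) ` Pow K"
  proof
    fix h :: "'a \<Rightarrow> 'b \<Rightarrow> bool"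
    assume "h \<in> {h. \<forall>i j. h i j \<longrightarrow> (i, j) \<in> K}"
    then have "{(i, j). h i j} \<in> Pow K" by auto
    then show "h \<in> (\<lambda>A i j. (i, j) \<in> A) ` Pow K" by (rule rev_image_eqI) simp
  qed
qed (use assms in simp)

lemma finite_six_vertex_states: "finite (six_vertex_states r c L R Tp B)"
proof (rule finite_subset)
  show "six_vertex_states r c L R Tp B \<subseteq>
      {h. \<forall>i j. h i j \<longrightarrow> (i, j) \<in> {..<r} \<times> {..c}} \<times> {v. \<forall>j i. v j i \<longrightarrow> (j, i) \<in> {..<c} \<times> {..r}}"
    by (auto simp: six_vertex_states_def)
qed (intro finite_cartesian_product finite_binary_predicates_within finite_SigmaI; simp)

lemma all_nat_iff_0_Suc: "(\<forall>n. P n) \<longleftrightarrow> P 0 \<and> (\<forall>n. P (Suc n))"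
  by (metis not0_implies_Suc)

lemma mem_six_vertex_states_Suc_rows_iff:
  "(h, v) \<in> six_vertex_states (Suc r) c L R Tp B \<longleftrightarrow>
     (\<forall>j. h 0 j \<longrightarrow> j \<le> c) \<and> (\<forall>j. v j 0 \<longrightarrow> j < c) \<and> h 0 0 = L 0 \<and> h 0 c = R 0
     \<and> (\<forall>j<c. v j 0 = Tp j) \<and> (\<forall>j<c. ice_vertex (h 0 j) (h 0 (Suc j)) (v j 0) (v j 1))
     \<and> (\<lambda>i. h (Suc i), \<lambda>j i. v j (Suc i))
         \<in> six_vertex_states r c (\<lambda>i. L (Suc i)) (\<lambda>i. R (Suc i)) (\<lambda>j. v j 1) B"
proof -
  have "(\<forall>i j. h i j \<longrightarrow> i < Suc r \<and> j \<le> c) \<longleftrightarrow>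
      (\<forall>j. h 0 j \<longrightarrow> j \<le> c) \<and> (\<forall>i j. h (Suc i) j \<longrightarrow> i < r \<and> j \<le> c)"
    by (subst all_nat_iff_0_Suc) simp
  moreover have "(\<forall>j i. v j i \<longrightarrow> j < c \<and> i \<le> Suc r) \<longleftrightarrow>
      (\<forall>j. v j 0 \<longrightarrow> j < c) \<and> (\<forall>j i. v j (Suc i) \<longrightarrow> j < c \<and> i \<le> r)"
    by (subst all_comm, subst all_nat_iff_0_Suc) auto
  ultimately show ?thesis
    unfolding mem_six_vertex_states_iff All_less_Suc2
    by (simp add: imp_conjR all_conj_distrib conj_commute conj_left_commute)
qed

lemma ice_vertex_row_forced:
  assumes ice: "\<forall>j<n. ice_vertex (a j) (a (Suc j)) (t j) (b j)"
    and "a 1" and "a 0 \<noteq> t 0" and "\<forall>j. 0 < j \<longrightarrow> j < n \<longrightarrow> t j"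
  shows "\<forall>j<n. a (Suc j) \<and> b j = (j \<noteq> 0)"
proof (intro allI impI)
  fix j assume "j < n"
  then show "a (Suc j) \<and> b j = (j \<noteq> 0)"
  proof (induction j)
    case 0
    then show ?case using ice assms(2,3) by (auto simp: ice_vertex_def)
  next
    case (Suc j)
    then show ?case using ice assms(4) by (auto simp: ice_vertex_def)
  qed
qed

lemma mem_six_vertex_states_top_row_rightwards_iff:
  assumes corner: "L 0 \<noteq> Tp 0" and top: "\<forall>j. 0 < j \<longrightarrow> j \<le> c \<longrightarrow> Tp j"
  shows "(h, v) \<in> six_vertex_states (Suc r) (Suc c) L R Tp B \<and> h 0 1 \<longleftrightarrow>
    R 0 \<and> h 0 = (\<lambda>j. if j = 0 then L 0 else j \<le> Suc c) \<and> (\<forall>j. v j 0 \<longleftrightarrow> j < Suc c \<and> Tp j)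
    \<and> (\<lambda>i. h (Suc i), \<lambda>j i. v j (Suc i))
        \<in> six_vertex_states r (Suc c) (\<lambda>i. L (Suc i)) (\<lambda>i. R (Suc i)) (\<lambda>j. j \<noteq> 0) B"
    (is "?state \<and> _ \<longleftrightarrow> _ \<and> _ \<and> _ \<and> ?rest \<in> ?I")
proof
  assume "?state \<and> h 0 1"
  then have mem: ?state and "h 0 1" by simp_all
  then have forced: "\<forall>j<Suc c. h 0 (Suc j) \<and> v j 1 = (j \<noteq> 0)"
    using corner top by (intro ice_vertex_row_forced) (auto simp: mem_six_vertex_states_Suc_rows_iff)
  have "h 0 j = (if j = 0 then L 0 else j \<le> Suc c)" for j
    using forced[rule_format, of "j - 1"] mem
    by (cases "j = 0") (auto simp: mem_six_vertex_states_Suc_rows_iff)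
  moreover have "R 0" and "v j 0 = (j < Suc c \<and> Tp j)" for j
    using forced mem by (auto simp: mem_six_vertex_states_Suc_rows_iff)
  moreover have
    "six_vertex_states r (Suc c) (\<lambda>i. L (Suc i)) (\<lambda>i. R (Suc i)) (\<lambda>j. v j 1) B = ?I"
    using forced by (intro six_vertex_states_cong) auto
  then have "?rest \<in> ?I"
    using mem by (simp add: mem_six_vertex_states_Suc_rows_iff)
  ultimately show "R 0 \<and> h 0 = (\<lambda>j. if j = 0 then L 0 else j \<le> Suc c)
      \<and> (\<forall>j. v j 0 \<longleftrightarrow> j < Suc c \<and> Tp j) \<and> ?rest \<in> ?I"
    by auto
next
  assume rhs: "R 0 \<and> h 0 = (\<lambda>j. if j = 0 then L 0 else j \<le> Suc c)
      \<and> (\<forall>j. v j 0 \<longleftrightarrow> j < Suc c \<and> Tp j) \<and> ?rest \<in> ?I"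
  then have "v j 1 = (j \<noteq> 0)" if "j < Suc c" for j
    using that by (simp add: mem_six_vertex_states_iff)
  moreover have
    "six_vertex_states r (Suc c) (\<lambda>i. L (Suc i)) (\<lambda>i. R (Suc i)) (\<lambda>j. v j 1) B = ?I"
    using calculation by (intro six_vertex_states_cong) auto
  ultimately show "?state \<and> h 0 1"
    using rhs corner top by (auto simp: mem_six_vertex_states_Suc_rows_iff ice_vertex_def)
qed

lemma card_top_row_rightwards:
  assumes corner: "L 0 \<noteq> Tp 0" and top: "\<forall>j. 0 < j \<longrightarrow> j \<le> c \<longrightarrow> Tp j"
  shows "card {s \<in> six_vertex_states (Suc r) (Suc c) L R Tp B. fst s 0 1} =
    (if R 0 then card (six_vertex_states r (Suc c) (\<lambda>i. L (Suc i)) (\<lambda>i. R (Suc i)) (\<lambda>j. j \<noteq> 0) B)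
     else 0)"
proof -
  let ?A = "{s \<in> six_vertex_states (Suc r) (Suc c) L R Tp B. fst s 0 1}"
  let ?I = "six_vertex_states r (Suc c) (\<lambda>i. L (Suc i)) (\<lambda>i. R (Suc i)) (\<lambda>j. j \<noteq> 0) B"
  define glue :: "(nat \<Rightarrow> nat \<Rightarrow> bool) \<times> (nat \<Rightarrow> nat \<Rightarrow> bool) \<Rightarrow> _"
    where "glue = (\<lambda>(h, v). (case_nat (\<lambda>j. if j = 0 then L 0 else j \<le> Suc c) h,
                              \<lambda>j. case_nat (j < Suc c \<and> Tp j) (v j)))"
  note top_row_iff = mem_six_vertex_states_top_row_rightwards_iff[where L = L and Tp = Tp, OF corner top]
  have "inj_on glue ?I"
    by (rule inj_on_inverseI[where g = "\<lambda>(h, v). (\<lambda>i. h (Suc i), \<lambda>j i. v j (Suc i))"])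
      (auto simp: glue_def)
  have glue_mem: "glue x \<in> ?A" if "R 0" and "x \<in> ?I" for x
  proof -
    obtain h v where x: "x = (h, v)" by (cases x)
    have "glue x \<in> six_vertex_states (Suc r) (Suc c) L R Tp B \<and> fst (glue x) 0 1"
      unfolding x glue_def prod.case fst_conv
      by (rule top_row_iff[THEN iffD2]) (use that in \<open>simp add: x\<close>)
    then show ?thesis by simp
  qed
  have glue_onto: "R 0 \<and> s \<in> glue ` ?I" if "s \<in> ?A" for s
  proof -
    obtain h v where s: "s = (h, v)" by (cases s)
    with that have "R 0" and h0: "h 0 = (\<lambda>j. if j = 0 then L 0 else j \<le> Suc c)"
      and v0: "\<forall>j. v j 0 \<longleftrightarrow> j < Suc c \<and> Tp j"
      and rest: "(\<lambda>i. h (Suc i), \<lambda>j i. v j (Suc i)) \<in> ?I"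
      using top_row_iff by auto
    from h0 v0 have "s = glue (\<lambda>i. h (Suc i), \<lambda>j i. v j (Suc i))"
      by (auto simp: s glue_def fun_eq_iff split: nat.split)
    with \<open>R 0\<close> rest show ?thesis by blast
  qed
  have "?A = (if R 0 then glue ` ?I else {})"
  proof (cases "R 0")
    case True
    then show ?thesis unfolding if_P[OF True] using glue_mem glue_onto by blast
  next
    case False
    then show ?thesis unfolding if_not_P[OF False] using glue_onto by blast
  qed
  with \<open>inj_on glue ?I\<close> show ?thesis
    by (simp add: card_image)
qed

lemma swap_mem_six_vertex_states_iff:
  "prod.swap s \<in> six_vertex_states c r Tp B L R \<longleftrightarrow> s \<in> six_vertex_states r c L R Tp B"
  by (cases s) (auto simp: mem_six_vertex_states_iff ice_vertex_commute)

lemma card_six_vertex_states_transpose: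
  "card {s \<in> six_vertex_states c r Tp B L R. P s} =
   card {s \<in> six_vertex_states r c L R Tp B. P (prod.swap s)}"
proof -
  have "{s \<in> six_vertex_states c r Tp B L R. P s} =
      prod.swap ` {s \<in> six_vertex_states r c L R Tp B. P (prod.swap s)}"
  proof (intro set_eqI iffI)
    fix s assume "s \<in> {s \<in> six_vertex_states c r Tp B L R. P s}"
    then show "s \<in> prod.swap ` {s \<in> six_vertex_states r c L R Tp B. P (prod.swap s)}"
      by (intro image_eqI[where x = "prod.swap s"])
        (simp_all add: swap_mem_six_vertex_states_iff[THEN iffD2])
  qed (auto dest: swap_mem_six_vertex_states_iff[THEN iffD2])
  then show ?thesis by (simp add: card_image)
qed

lemma card_left_column_downwards:
  assumes corner: "L 0 \<noteq> Tp 0" and left: "\<forall>i. 0 < i \<longrightarrow> i \<le> r \<longrightarrow> L i"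
  shows "card {s \<in> six_vertex_states (Suc r) (Suc c) L R Tp B. snd s 0 1} =
    (if B 0 then card (six_vertex_states (Suc r) c (\<lambda>i. i \<noteq> 0) R (\<lambda>j. Tp (Suc j)) (\<lambda>j. B (Suc j)))
     else 0)"
proof -
  have "card {s \<in> six_vertex_states (Suc r) (Suc c) L R Tp B. snd s 0 1} =
      card {s \<in> six_vertex_states (Suc c) (Suc r) Tp B L R. fst s 0 1}"
    using card_six_vertex_states_transpose[where r = "Suc c" and c = "Suc r" and P = "\<lambda>s. snd s 0 1"]
    by simp
  moreover have
    "card (six_vertex_states c (Suc r) (\<lambda>j. Tp (Suc j)) (\<lambda>j. B (Suc j)) (\<lambda>i. i \<noteq> 0) R) =
     card (six_vertex_states (Suc r) c (\<lambda>i. i \<noteq> 0) R (\<lambda>j. Tp (Suc j)) (\<lambda>j. B (Suc j)))"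
    using card_six_vertex_states_transpose[where r = c and c = "Suc r" and P = "\<lambda>_. True"] by simp
  ultimately show ?thesis
    using card_top_row_rightwards[where L = Tp and Tp = L and r = c and c = r and R = B and B = R]
      corner left
    by simp
qed

lemma card_six_vertex_states_corner_recurrence:
  assumes corner: "L 0 \<noteq> Tp 0"
    and left: "\<forall>i. 0 < i \<longrightarrow> i \<le> r \<longrightarrow> L i" and top: "\<forall>j. 0 < j \<longrightarrow> j \<le> c \<longrightarrow> Tp j"
  shows "card (six_vertex_states (Suc r) (Suc c) L R Tp B) =
    (if R 0 then card (six_vertex_states r (Suc c) (\<lambda>i. L (Suc i)) (\<lambda>i. R (Suc i)) (\<lambda>j. j \<noteq> 0) B)
     else 0) +
    (if B 0 then card (six_vertex_states (Suc r) c (\<lambda>i. i \<noteq> 0) R (\<lambda>j. Tp (Suc j)) (\<lambda>j. B (Suc j)))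
     else 0)"
proof -
  let ?X = "six_vertex_states (Suc r) (Suc c) L R Tp B"
  have "snd s 0 1 \<longleftrightarrow> \<not> fst s 0 1" if "s \<in> ?X" for s
  proof -
    obtain h v where s: "s = (h, v)" by (cases s)
    have "ice_vertex (L 0) (h 0 1) (Tp 0) (v 0 1)"
      using that by (auto simp: s mem_six_vertex_states_Suc_rows_iff)
    with corner show ?thesis by (auto simp: s ice_vertex_def)
  qed
  then have "?X = {s \<in> ?X. fst s 0 1} \<union> {s \<in> ?X. snd s 0 1}"
    and "{s \<in> ?X. fst s 0 1} \<inter> {s \<in> ?X. snd s 0 1} = {}"
    by auto
  then have "card ?X = card {s \<in> ?X. fst s 0 1} + card {s \<in> ?X. snd s 0 1}"
    by (metis (no_types, lifting) card_Un_disjoint finite_six_vertex_states finite_Un)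
  then show ?thesis
    using card_top_row_rightwards[where L = L and Tp = Tp, OF corner top]
      card_left_column_downwards[where L = L and Tp = Tp, OF corner left]
    by simp
qed

lemma six_vertex_states_zero_columns:
  "six_vertex_states r 0 L R Tp B =
    (if \<forall>i<r. L i = R i then {(\<lambda>i j. i < r \<and> j = 0 \<and> L i, \<lambda>j i. False)} else {})"
  by (auto simp: six_vertex_states_def ice_rule_def fun_eq_iff; metis)

lemma S_zero_rows: "S 0 (Suc c) = 0"
  using card_six_vertex_states_transpose[where r = 0 and c = "Suc c" and P = "\<lambda>_. True"]
  by (simp add: S_def six_vertex_states_zero_columns)

lemma T_zero_columns: "T (Suc r) 0 = (if r = 0 then 1 else 0)"
  by (auto simp: T_def six_vertex_states_zero_columns)

lemma S_eq_card_right_boundary_shifted: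
  "S r (Suc c) =
    card (six_vertex_states r (Suc c) (\<lambda>i. True) (\<lambda>i. Suc i \<noteq> r) (\<lambda>j. j \<noteq> 0) (\<lambda>j. True))"
  unfolding S_def by (rule arg_cong[where f = card], rule six_vertex_states_cong) auto

lemma S_Suc_Suc: "S (Suc r) (Suc c) = S r (Suc c) + T (Suc r) c"
proof -
  have "S (Suc r) (Suc c) = (if r \<noteq> 0 then S r (Suc c) else 0) + T (Suc r) c"
    unfolding S_def [of "Suc r"] T_def S_eq_card_right_boundary_shifted
    by (subst card_six_vertex_states_corner_recurrence) auto
  then show ?thesis using S_zero_rows by (cases r) simp_all
qed

lemma T_Suc_Suc: "T (Suc r) (Suc c) = S r (Suc c) + T (Suc r) c"
proof -
  have "T (Suc r) (Suc c) = (if r \<noteq> 0 then S r (Suc c) else 0) + T (Suc r) c"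
    unfolding T_def [of "Suc r"] S_eq_card_right_boundary_shifted
    by (subst card_six_vertex_states_corner_recurrence) auto
  then show ?thesis using S_zero_rows by (cases r) simp_all
qed

lemma T_eq_S: "T (Suc r) (Suc c) = S (Suc r) (Suc c)"
  by (simp only: S_Suc_Suc T_Suc_Suc)

lemma S_binomial: "S (Suc a) (Suc b) = (a + b) choose b"
proof (induction a arbitrary: b)
  case 0
  show ?case
  proof (induction b)
    case 0
    show ?case by (simp add: S_Suc_Suc S_zero_rows T_zero_columns)
  next
    case (Suc b)
    then show ?case by (simp add: S_Suc_Suc S_zero_rows T_eq_S)
  qed
next
  case (Suc a)
  note S_rows_binomial = Suc.IH
  show ?case
  proof (induction b)
    case 0
    show ?case using S_rows_binomial[of 0] by (simp add: S_Suc_Suc T_zero_columns)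
  next
    case (Suc b)
    then show ?case using S_rows_binomial[of "Suc b"] by (simp add: S_Suc_Suc T_eq_S)
  qed
qed

theorem lemma1:
  fixes r c :: nat
  assumes "r \<ge> 1" and "c \<ge> 1"
  shows "S r c = (r + c - 2) choose (c - 1) \<and> T r c = (r + c - 2) choose (c - 1)"
proof -
  obtain a b where "r = Suc a" "c = Suc b"
    using assms by (metis Suc_le_D One_nat_def)
  then show ?thesis using S_binomial[of a b] T_eq_S[of a b] by simp
qed

end
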